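(* Let $\mathcal{D}=(\Omega,\mathcal{B})$ be a supersimple $2$-$(n,4,\lambda)$ design satisfying property $(\triangle)$, such that $(\Omega,\mathcal{C})$ is a regular two-graph, where $\mathcal{C}$ is the set of collinear triples of $\mathcal{D}$. Let $\infty\in\Omega$, $G:=\mathcal{L}_\infty(\mathcal{D})$, and $\mathcal{E}:=\{[a,b]\mid a,b\in\Omega\}$. Then $G$ is a subgroup of $\operatorname{Aut}(\mathcal{D})$, and $(G,\mathcal{E})$ is a $3$-transposition group.
   Context: A $2$-$(n,4,\lambda)$ design $(\Omega,\mathcal{B})$: $n$ points, a multiset of $4$-subsets (lines), every $2$-subset in exactly $\lambda$ lines; supersimple: distinct lines meet in at most two points. For distinct $a,b$ with lines $\{a,b,a_i,b_i\}$ ($1\le i\le\lambda$) through them, the elementary move is $[a,b]:=(a,b)\prod_i(a_i,b_i)$; $[a,a]:=1$. Permutations act on the right, products composed left to right; $[a_0,\dots,a_k]:=[a_0,a_1]\cdots[a_{k-1},a_k]$; $\mathcal{L}_\infty(\mathcal{D})$ is the set of all move sequences $[\infty,a_1,\dots,a_k]$, $k\ge1$. Property $(\triangle)$: if $B_1,B_2\in\mathcal{B}$ with $|B_1\cap B_2|=2$ then $B_1\triangle B_2\in\mathcal{B}$. Collinear triple: $3$-subset contained in a line. Regular two-graph: $(\Omega,\mathcal{C})$ is a $2$-$(n,3,\mu)$ design with every $4$-subset containing $0$, $2$ or $4$ members of $\mathcal{C}$. A $3$-transposition group is a pair $(G,\mathcal{E})$, $\mathcal{E}$ a set of involutions with $G=\langle\mathcal{E}\rangle$,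 $\mathcal{E}$ a union of $G$-conjugacy classes, and $gh$ of order $1,2$ or $3$ for all $g,h\in\mathcal{E}$. *)

theory Defs
  imports Main "HOL-Library.Multiset" "HOL-Combinatorics.Permutations"
begin

text \<open>A 2-(n,4,lambda) design on the finite point set Omega (n = card Omega),
  lines form a multiset of 4-subsets.\<close>
definition design_2_4 :: "'a set \<Rightarrow> 'a set multiset \<Rightarrow> nat \<Rightarrow> bool" where
  "design_2_4 \<Omega> \<B> lam \<longleftrightarrow> finite \<Omega> \<and>
     (\<forall>L. L \<in># \<B> \<longrightarrow> L \<subseteq> \<Omega> \<and> card L = 4) \<and>
     (\<forall>x y. x \<in> \<Omega> \<longrightarrow> y \<in> \<Omega> \<longrightarrow> x \<noteq> y \<longrightarrow>
        size (filter_mset (\<lambda>L. {x, y} \<subseteq> L) \<B>) = lam)"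

text \<open>Supersimple: any two distinct lines (distinct occurrences in the multiset)
  meet in at most two points.\<close>
definition supersimple :: "'a set multiset \<Rightarrow> bool" where
  "supersimple \<B> \<longleftrightarrow> (\<forall>L M. L \<in># \<B> \<longrightarrow> M \<in># (\<B> - {#L#}) \<longrightarrow> card (L \<inter> M) \<le> 2)"

definition property_triangle :: "'a set multiset \<Rightarrow> bool" where
  "property_triangle \<B> \<longleftrightarrow>
     (\<forall>L M. L \<in># \<B> \<longrightarrow> M \<in># \<B> \<longrightarrow> card (L \<inter> M) = 2 \<longrightarrow> (L - M) \<union> (M - L) \<in># \<B>)"

definition collinear_triples :: "'a set \<Rightarrow> 'a set multiset \<Rightarrow> 'a set set" where
  "collinear_triples \<Omega> \<B> = {T. T \<subseteq> \<Omega> \<and> card T = 3 \<and> (\<exists>L. L \<in># \<B> \<and> T \<subseteq> L)}"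

definition regular_two_graph :: "'a set \<Rightarrow> 'a set set \<Rightarrow> bool" where
  "regular_two_graph \<Omega> \<C> \<longleftrightarrow>
     (\<forall>T\<in>\<C>. T \<subseteq> \<Omega> \<and> card T = 3) \<and>
     (\<exists>\<mu>::nat. \<forall>x y. x \<in> \<Omega> \<longrightarrow> y \<in> \<Omega> \<longrightarrow> x \<noteq> y \<longrightarrow> card {T\<in>\<C>. {x, y} \<subseteq> T} = \<mu>) \<and>
     (\<forall>F. F \<subseteq> \<Omega> \<longrightarrow> card F = 4 \<longrightarrow> card {T\<in>\<C>. T \<subseteq> F} \<in> {0, 2, 4})"

text \<open>Elementary move [a,b] = (a,b) prod_i (a_i,b_i), over the lines {a,b,a_i,b_i}
  through a and b; [a,a] = 1.  In a supersimple design the transpositions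
  (a_i,b_i) are disjoint, so the product is the following map.\<close>
definition move :: "'a set multiset \<Rightarrow> 'a \<Rightarrow> 'a \<Rightarrow> 'a \<Rightarrow> 'a" where
  "move \<B> a b x =
    (if a = b then x
     else if x = a then b
     else if x = b then a
     else if (\<exists>y. y \<notin> {a, b, x} \<and> {a, b, x, y} \<in># \<B>)
       then (THE y. y \<notin> {a, b, x} \<and> {a, b, x, y} \<in># \<B>)
     else x)"

text \<open>[a_0,...,a_k] = [a_0,a_1]...[a_{k-1},a_k]; permutations act on the right,
  products are composed left to right, so as functions the first factor is applied first.\<close>
fun move_seq :: "'a set multiset \<Rightarrow> 'a list \<Rightarrow> 'a \<Rightarrow> 'a" where
  "move_seq \<B> (a # b # rest) = move_seq \<B> (b # rest) \<circ> move \<B> a b"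
| "move_seq \<B> _ = id"

definition L_inf :: "'a set \<Rightarrow> 'a set multiset \<Rightarrow> 'a \<Rightarrow> ('a \<Rightarrow> 'a) set" where
  "L_inf \<Omega> \<B> inf0 = {move_seq \<B> (inf0 # as) | as. as \<noteq> [] \<and> set as \<subseteq> \<Omega>}"

definition Aut :: "'a set \<Rightarrow> 'a set multiset \<Rightarrow> ('a \<Rightarrow> 'a) set" where
  "Aut \<Omega> \<B> = {p. p permutes \<Omega> \<and> image_mset (image p) \<B> = \<B>}"

definition is_subgroup_of :: "('a \<Rightarrow> 'a) set \<Rightarrow> ('a \<Rightarrow> 'a) set \<Rightarrow> bool" where
  "is_subgroup_of G H \<longleftrightarrow> G \<subseteq> H \<and> id \<in> G \<and>
     (\<forall>g\<in>G. \<forall>h\<in>G. h \<circ> g \<in> G) \<and> (\<forall>g\<in>G. inv g \<in> G)"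

inductive_set gen_group :: "('a \<Rightarrow> 'a) set \<Rightarrow> ('a \<Rightarrow> 'a) set" for E where
  gen_id: "id \<in> gen_group E"
| gen_base: "e \<in> E \<Longrightarrow> e \<in> gen_group E"
| gen_mult: "g \<in> gen_group E \<Longrightarrow> h \<in> gen_group E \<Longrightarrow> h \<circ> g \<in> gen_group E"
| gen_inv: "g \<in> gen_group E \<Longrightarrow> inv g \<in> gen_group E"

definition three_transposition_group :: "('a \<Rightarrow> 'a) set \<Rightarrow> ('a \<Rightarrow> 'a) set \<Rightarrow> bool" where
  "three_transposition_group G E \<longleftrightarrow>
     (\<forall>e\<in>E. e \<circ> e = id \<and> e \<noteq> id) \<and>
     G = gen_group E \<and>
     (\<forall>g\<in>G. \<forall>e\<in>E. g \<circ> e \<circ> inv g \<in> E) \<and>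
     (\<forall>g\<in>E. \<forall>h\<in>E. (h \<circ> g) ^^ 2 = id \<or> (h \<circ> g) ^^ 3 = id)"

end

theory Submission
  imports Defs
begin

text \<open>
  In a supersimple design the elementary move [a,b] is an involution swapping a with b and
  the two remaining points of each line through a and b.  Property (\<triangle>) lets one
  trade two lines meeting in two points for the line on their symmetric difference, and the
  regular two-graph condition says that an even number of the four triples of any four points
  is collinear.  With these two exchange rules a case analysis shows that [a,b] maps lines to
  lines, that [a,b] = [c,d] whenever {a,b,c,d} is a line, and hence that an automorphism g
  conjugates [c,d] to [g c, g d].  So the moves form a conjugation-closed set of involutions,
  and going through the configurations of two pairs {a,b}, {c,d} shows that two moves always
  commute or braid, i.e. their product has order 1, 2 or 3.  Finally L_inf(D) is already the
  group generated by all moves: a word ending in e can be extended by [c,d] directly if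
  e \<in> {c,d}, via [c,d] = [e,f] if {e,c,d,f} is a line, and otherwise via the identity
  [e,c][c,d][d,e] = [c,d] that holds when c, d, e are not collinear.
\<close>

lemma card_eq_4_obtain: "card S = 4 \<Longrightarrow> \<exists>p q r s. S = {p,q,r,s} \<and> distinct [p,q,r,s]"
  by (auto simp: card_Suc_eq numeral_eq_Suc)

lemma card_eq_3_obtain: "card S = 3 \<Longrightarrow> \<exists>p q r. S = {p,q,r} \<and> distinct [p,q,r]"
  by (auto simp: card_Suc_eq numeral_eq_Suc)

lemma card_filter_eq_sum_of_bool: "finite A \<Longrightarrow> card {x\<in>A. P x} = (\<Sum>x\<in>A. of_bool (P x))"
  by (simp add: of_bool_def sum.If_cases Int_def)

lemma sym_diff_image:
  assumes "inj f"
  shows "(f ` K - f ` K') \<union> (f ` K' - f ` K) = f ` ((K - K') \<union> (K' - K))"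
  by (simp add: image_Un image_set_diff[OF assms])

subsection \<open>Involutions that commute or braid\<close>

definition commute_or_braid :: "('a \<Rightarrow> 'a) \<Rightarrow> ('a \<Rightarrow> 'a) \<Rightarrow> bool" where
  "commute_or_braid g h \<longleftrightarrow> h \<circ> g = g \<circ> h \<or> h \<circ> g \<circ> h = g \<circ> h \<circ> g"

lemma commute_or_braid_refl: "commute_or_braid g g"
  unfolding commute_or_braid_def by simp

lemma commute_or_braid_if_conj_fixed:
  assumes hh: "h \<circ> h = id" and "h \<circ> g \<circ> h = g"
  shows "commute_or_braid g h"
proof -
  have "h \<circ> g = h \<circ> g \<circ> (h \<circ> h)" by (simp add: hh)
  also have "\<dots> = g \<circ> h" using assms(2) by (simp add: o_assoc)
  finally show ?thesis unfolding commute_or_braid_def by blast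
qed

lemma commute_or_braid_order:
  assumes gg: "g \<circ> g = id" and hh: "h \<circ> h = id" and "commute_or_braid g h"
  shows "(h \<circ> g) ^^ 2 = id \<or> (h \<circ> g) ^^ 3 = id"
proof -
  have g2: "g (g x) = x" and h2: "h (h x) = x" for x
    using gg hh by (metis comp_apply id_apply)+
  from assms(3) consider "h \<circ> g = g \<circ> h" | "h \<circ> g \<circ> h = g \<circ> h \<circ> g"
    unfolding commute_or_braid_def by blast
  then show ?thesis
  proof cases
    case 1
    then have "h (g x) = g (h x)" for x by (metis comp_apply)
    then have "((h \<circ> g) ^^ 2) x = x" for x by (simp add: numeral_2_eq_2 g2 h2)
    then show ?thesis by (simp add: fun_eq_iff)
  next
    case 2
    then have "h (g (h x)) = g (h (g x))" for x by (metis comp_apply)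
    then have "((h \<circ> g) ^^ 3) x = x" for x by (simp add: numeral_3_eq_3 g2 h2)
    then show ?thesis by (simp add: fun_eq_iff)
  qed
qed

lemma involution_conj_cancel:
  assumes "s \<circ> s = id" "t \<circ> t = id" "t \<circ> s \<circ> t = m" "s \<circ> m \<circ> s = t"
  shows "t \<circ> m \<circ> s = m"
  using assms by (metis comp_assoc comp_id)

subsection \<open>Supersimple designs\<close>

locale supersimple_design =
  fixes \<Omega> :: "'a set" and B :: "'a set multiset" and lam :: nat
  assumes design: "design_2_4 \<Omega> B lam" and supersimple: "supersimple B"
begin

lemma line_subset: "L \<in># B \<Longrightarrow> L \<subseteq> \<Omega>"
  and card_line: "L \<in># B \<Longrightarrow> card L = 4"
  using design unfolding design_2_4_def by auto

lemma finite_line: "L \<in># B \<Longrightarrow> finite L"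
  using card_line by (metis card.infinite zero_neq_numeral)

lemma line_in_points: "{p,q,r,s} \<in># B \<Longrightarrow> p \<in> \<Omega> \<and> q \<in> \<Omega> \<and> r \<in> \<Omega> \<and> s \<in> \<Omega>"
  using line_subset by blast

lemma distinct_line: "{p,q,r,s} \<in># B \<Longrightarrow> distinct [p,q,r,s]"
  by (rule card_distinct) (use card_line[of "{p,q,r,s}"] in simp)

lemma card_Int_lines_le_2: "L \<in># B \<Longrightarrow> M \<in># B \<Longrightarrow> L \<noteq> M \<Longrightarrow> card (L \<inter> M) \<le> 2"
proof -
  assume "L \<in># B" "M \<in># B" "L \<noteq> M"
  then have "M \<in># B - {#L#}" by (simp add: in_diff_count)
  with \<open>L \<in># B\<close> show ?thesis using supersimple unfolding supersimple_def by blast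
qed

lemma count_line_le_1: "count B L \<le> 1"
proof (rule ccontr)
  assume "\<not> count B L \<le> 1"
  then have "L \<in># B - {#L#}" by (simp add: in_diff_count)
  moreover have L: "L \<in># B" using \<open>\<not> count B L \<le> 1\<close> not_in_iff[of L B] by fastforce
  ultimately have "card (L \<inter> L) \<le> 2" using supersimple unfolding supersimple_def by blast
  then show False using card_line[OF L] by simp
qed

lemma line_eq_if_three_common:
  assumes "L \<in># B" "M \<in># B" "{x,y,z} \<subseteq> L" "{x,y,z} \<subseteq> M" "distinct [x,y,z]"
  shows "L = M"
proof (rule ccontr)
  assume "L \<noteq> M"
  then have "card (L \<inter> M) \<le> 2" using assms card_Int_lines_le_2 by blast
  moreover have "card {x,y,z} \<le> card (L \<inter> M)"
    using assms finite_line by (intro card_mono) auto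
  ultimately show False using assms(5) by simp
qed

lemma line_obtain_through:
  assumes L: "L \<in># B" and a: "a \<in> L"
  obtains x y z where "L = {a,x,y,z}" "distinct [a,x,y,z]"
proof -
  have "card (L - {a}) = 3" using card_line[OF L] a card_ge_0_finite by fastforce
  then obtain x y z where "L - {a} = {x,y,z}" "distinct [x,y,z]" using card_eq_3_obtain by blast
  with a that show ?thesis by (metis Diff_iff insert_Diff distinct.simps(2) insertCI list.set(1,2))
qed

definition collinear :: "'a \<Rightarrow> 'a \<Rightarrow> 'a \<Rightarrow> bool" where
  "collinear x y z \<longleftrightarrow> (\<exists>L. L \<in># B \<and> x \<in> L \<and> y \<in> L \<and> z \<in> L)"

lemma collinear_swap12: "collinear x y z = collinear y x z"
  and collinear_swap23: "collinear x y z = collinear x z y"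
  unfolding collinear_def by blast+

lemma line_collinear: "{x,y,z,w} \<in># B \<Longrightarrow> collinear x y z"
  unfolding collinear_def by blast

lemma collinear_obtain_line:
  assumes "distinct [x,y,z]" "collinear x y z"
  obtains w where "{x,y,z,w} \<in># B" "w \<notin> {x,y,z}"
proof -
  obtain L where L: "L \<in># B" "x \<in> L" "y \<in> L" "z \<in> L" using assms(2) collinear_def by auto
  have "card (L - {x,y,z}) = 1"
    using L assms(1) card_line[OF L(1)] by (subst card_Diff_subset) auto
  then obtain w where w: "L - {x,y,z} = {w}" by (meson card_1_singletonE)
  then have "L = {x,y,z,w}" using L by blast
  with w L(1) that show ?thesis by blast
qed

lemma collinear_triples_iff:
  "x \<in> \<Omega> \<Longrightarrow> y \<in> \<Omega> \<Longrightarrow> z \<in> \<Omega> \<Longrightarrow> distinct [x,y,z] \<Longrightarrow>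
    {x,y,z} \<in> collinear_triples \<Omega> B \<longleftrightarrow> collinear x y z"
  unfolding collinear_triples_def collinear_def by auto

lemma move_left: "move B a b a = b"
  and move_right: "move B a b b = a"
  and move_self: "move B a a = id"
  and move_commute: "move B a b = move B b a"
  unfolding move_def by (auto simp: fun_eq_iff insert_commute)

lemma move_on_line:
  assumes L: "{a,b,x,y} \<in># B"
  shows "move B a b x = y"
proof -
  have d: "distinct [a,b,x,y]" using distinct_line[OF L] .
  have "(THE y. y \<notin> {a, b, x} \<and> {a, b, x, y} \<in># B) = y"
  proof (rule the_equality)
    show "y \<notin> {a, b, x} \<and> {a, b, x, y} \<in># B" using d L by auto
    fix y' assume y': "y' \<notin> {a, b, x} \<and> {a, b, x, y'} \<in># B"
    then have "{a,b,x,y'} = {a,b,x,y}"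
      using line_eq_if_three_common[of "{a,b,x,y'}" "{a,b,x,y}" a b x] L d by auto
    then show "y' = y" using y' by (metis insertI1 insert_commute insert_iff)
  qed
  then show ?thesis using d L unfolding move_def by auto
qed

lemma move_fixes_noncollinear:
  "a \<noteq> b \<Longrightarrow> x \<noteq> a \<Longrightarrow> x \<noteq> b \<Longrightarrow> \<not> collinear a b x \<Longrightarrow> move B a b x = x"
  using line_collinear unfolding move_def by metis

lemma move_cases:
  assumes "a \<noteq> b" "t \<noteq> a" "t \<noteq> b"
  shows "collinear a b t \<and> {a,b,t,move B a b t} \<in># B \<or> \<not> collinear a b t \<and> move B a b t = t"
proof (cases "collinear a b t")
  case True
  then obtain w where w: "{a,b,t,w} \<in># B" using collinear_obtain_line[of a b t] assms by auto
  then show ?thesis using move_on_line[OF w] True by simp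
qed (use move_fixes_noncollinear assms in simp)

lemma move_move: "move B a b (move B a b x) = x"
proof (cases "a = b \<or> x = a \<or> x = b")
  case True then show ?thesis using move_left move_right move_self by auto
next
  case False
  then consider "{a,b,x,move B a b x} \<in># B" | "move B a b x = x" using move_cases by blast
  then show ?thesis
  proof cases
    case 1
    then have "{a,b,move B a b x,x} \<in># B" by (simp add: insert_commute)
    then show ?thesis by (rule move_on_line)
  qed simp
qed

lemma move_involution: "move B a b \<circ> move B a b = id"
  by (simp add: fun_eq_iff move_move)

lemma inv_move: "inv (move B a b) = move B a b"
  by (rule inv_equality) (simp_all add: move_move)

lemma move_outside: "a \<in> \<Omega> \<Longrightarrow> b \<in> \<Omega> \<Longrightarrow> x \<notin> \<Omega> \<Longrightarrow> move B a b x = x"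
  using line_subset unfolding move_def by auto

lemma Aut_id: "id \<in> Aut \<Omega> B"
  unfolding Aut_def by (simp add: permutes_id image_mset.id)

lemma Aut_comp: "p \<in> Aut \<Omega> B \<Longrightarrow> q \<in> Aut \<Omega> B \<Longrightarrow> q \<circ> p \<in> Aut \<Omega> B"
proof -
  assume p: "p \<in> Aut \<Omega> B" and q: "q \<in> Aut \<Omega> B"
  have "image (q \<circ> p) = image q \<circ> image p" by (rule ext) (simp add: image_comp)
  then have "image_mset (image (q \<circ> p)) B = B"
    using p q unfolding Aut_def by (simp add: multiset.map_comp[symmetric])
  then show ?thesis using p q unfolding Aut_def by (auto intro: permutes_compose)
qed

lemma Aut_line_iff:
  assumes g: "g \<in> Aut \<Omega> B"
  shows "g ` L \<in># B \<longleftrightarrow> L \<in># B"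
proof -
  have inj: "inj g" and im: "image_mset (image g) B = B"
    using g permutes_inj unfolding Aut_def by auto
  have "g ` L \<in># image_mset (image g) B \<longleftrightarrow> L \<in># B"
    using inj by (auto simp: inj_image_eq_iff)
  then show ?thesis using im by simp
qed

text \<open>Supersimplicity makes B a set, so an involution of \<Omega> mapping lines to lines
  preserves B with multiplicities.\<close>
lemma Aut_if_involution:
  assumes inv: "\<And>x. f (f x) = x" and out: "\<And>x. x \<notin> \<Omega> \<Longrightarrow> f x = x"
    and lines: "\<And>L. L \<in># B \<Longrightarrow> f ` L \<in># B"
  shows "f \<in> Aut \<Omega> B"
proof -
  have perm: "f permutes \<Omega>"
    unfolding permutes_def using out inv by metis
  let ?F = "image f"
  have FF: "?F (?F X) = X" for X using inv by (simp add: image_image)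
  have "count (image_mset ?F B) L = count B L" for L
  proof -
    have "?F -` {L} = {?F L}" using FF by auto
    then have "count (image_mset ?F B) L = count B (?F L)"
      by (cases "?F L \<in># B") (auto simp: count_image_mset not_in_iff)
    also have "\<dots> = count B L"
      using count_line_le_1[of L] count_line_le_1[of "?F L"] lines[of L] lines[of "?F L"] FF
      by (metis count_eq_zero_iff le_antisym less_one linorder_not_le)
    finally show ?thesis .
  qed
  then show ?thesis using perm unfolding Aut_def by (simp add: multiset_eqI)
qed

lemma Aut_conj_move_apply:
  assumes g: "g \<in> Aut \<Omega> B"
  shows "g (move B a b y) = move B (g a) (g b) (g y)"
proof -
  have perm: "g permutes \<Omega>" using g unfolding Aut_def by auto
  have inj: "inj g" using permutes_inj[OF perm] .
  have gi: "\<And>x. g (inv g x) = x" using permutes_inverses(1)[OF perm] .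
  show ?thesis
  proof (cases "a = b \<or> y = a \<or> y = b")
    case True then show ?thesis using move_left move_right move_self by auto
  next
    case False
    then have ne: "g a \<noteq> g b" "g y \<noteq> g a" "g y \<noteq> g b" using inj by (auto simp: inj_eq)
    consider "{a,b,y,move B a b y} \<in># B" | "\<not> collinear a b y" "move B a b y = y"
      using move_cases False by blast
    then show ?thesis
    proof cases
      case 1
      then have "g ` {a,b,y,move B a b y} \<in># B" using Aut_line_iff[OF g] by blast
      then show ?thesis by (simp add: move_on_line)
    next
      case 2
      have "\<not> collinear (g a) (g b) (g y)"
      proof
        assume "collinear (g a) (g b) (g y)"
        then obtain w where w: "{g a, g b, g y, w} \<in># B"
          using collinear_obtain_line[of "g a" "g b" "g y"] ne by auto
        have "g ` {a,b,y,inv g w} = {g a, g b, g y, w}" using gi by simp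
        then have "{a,b,y,inv g w} \<in># B" using Aut_line_iff[OF g] w by metis
        then show False using 2 line_collinear by blast
      qed
      then show ?thesis using 2 move_fixes_noncollinear ne by simp
    qed
  qed
qed

lemma Aut_conj_move:
  assumes g: "g \<in> Aut \<Omega> B"
  shows "g \<circ> move B a b \<circ> inv g = move B (g a) (g b)"
proof
  fix x
  have "g permutes \<Omega>" using g unfolding Aut_def by simp
  then have "g (inv g x) = x" by (rule permutes_inverses(1))
  then show "(g \<circ> move B a b \<circ> inv g) x = move B (g a) (g b) x"
    using Aut_conj_move_apply[OF g, of a b "inv g x"] by simp
qed

end

subsection \<open>Designs with property (\<triangle>)\<close>

locale triangle_design = supersimple_design +
  assumes triangle: "property_triangle B"
begin

lemma line_symdiff:
  assumes L: "{p,q,r,s} \<in># B" and M: "{p,q,u,v} \<in># B" and ne: "{p,q,r,s} \<noteq> {p,q,u,v}"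
  shows "{r,s,u,v} \<in># B \<and> r \<notin> {u,v} \<and> s \<notin> {u,v}"
proof -
  have d1: "distinct [p,q,r,s]" and d2: "distinct [p,q,u,v]"
    using distinct_line L M by blast+
  have rs: "r \<notin> {u,v}" "s \<notin> {u,v}"
    using line_eq_if_three_common[OF L M, of p q r] line_eq_if_three_common[OF L M, of p q s] d1 ne
    by auto
  then have "{p,q,r,s} \<inter> {p,q,u,v} = {p,q}" by auto
  then have "card ({p,q,r,s} \<inter> {p,q,u,v}) = 2" using d1 by simp
  then have "({p,q,r,s} - {p,q,u,v}) \<union> ({p,q,u,v} - {p,q,r,s}) \<in># B"
    using triangle L M unfolding property_triangle_def by blast
  moreover have "({p,q,r,s} - {p,q,u,v}) \<union> ({p,q,u,v} - {p,q,r,s}) = {r,s,u,v}"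
    using rs d1 d2 by auto
  ultimately show ?thesis using rs by simp
qed

lemma move_eq_move_complement:
  assumes L: "{p,q,r,s} \<in># B"
  shows "move B p q = move B r s"
proof
  fix x
  have d: "distinct [p,q,r,s]" using distinct_line[OF L] .
  have L': "{r,s,p,q} \<in># B" "{r,s,q,p} \<in># B" "{p,q,s,r} \<in># B"
    using L by (simp_all add: insert_commute)
  show "move B p q x = move B r s x"
  proof (cases "x \<in> {p,q,r,s}")
    case True
    then show ?thesis
      using move_left move_right move_on_line[OF L] move_on_line[OF L'(1)] move_on_line[OF L'(2)]
        move_on_line[OF L'(3)] by auto
  next
    case x: False
    have to_rs: "{r,s,x,y} \<in># B" if "{p,q,x,y} \<in># B" for y
    proof -
      have "{p,q,r,s} \<noteq> {p,q,x,y}" using x by auto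
      then show ?thesis using line_symdiff[OF L that] by simp
    qed
    have to_pq: "{p,q,x,y} \<in># B" if "{r,s,x,y} \<in># B" for y
    proof -
      have "{r,s,p,q} \<noteq> {r,s,x,y}" using x by auto
      then show ?thesis using line_symdiff[OF L'(1) that] by simp
    qed
    have dx: "distinct [p,q,x]" "distinct [r,s,x]" using d x by auto
    show ?thesis
    proof (cases "collinear p q x")
      case True
      then obtain y where y: "{p,q,x,y} \<in># B" using collinear_obtain_line[OF dx(1)] by blast
      show ?thesis using move_on_line[OF y] move_on_line[OF to_rs[OF y]] by simp
    next
      case False
      have "\<not> collinear r s x"
      proof
        assume "collinear r s x"
        then obtain y where "{r,s,x,y} \<in># B" using collinear_obtain_line[OF dx(2)] by blast
        then show False using False to_pq line_collinear by blast
      qed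
      then show ?thesis using False move_fixes_noncollinear dx by (metis distinct_length_2_or_more)
    qed
  qed
qed

lemma line_through_move_partner:
  assumes d: "distinct [a,b,x,y,z]" and L: "{a,x,y,z} \<in># B" and M: "{a,b,x,x'} \<in># B"
  shows "{b,x',y,z} \<in># B"
proof -
  have "{a,x,b,x'} \<in># B" using M by (simp add: insert_commute)
  moreover have "{a,x,b,x'} \<noteq> {a,x,y,z}" using d by auto
  ultimately show ?thesis using line_symdiff[of a x b x' y z] L by simp
qed

end

subsection \<open>Designs whose collinear triples form a regular two-graph\<close>

locale two_graph_design = triangle_design +
  assumes two_graph: "regular_two_graph \<Omega> (collinear_triples \<Omega> B)"
begin

text \<open>Among the four triples of four points an even number is collinear.\<close>
lemma collinear_parity:
  assumes d: "distinct [p,q,r,s]" and pts: "p \<in> \<Omega>" "q \<in> \<Omega>" "r \<in> \<Omega>" "s \<in> \<Omega>"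
  shows "(collinear q r s = collinear p r s) = (collinear p q s = collinear p q r)"
proof -
  define C where "C = collinear_triples \<Omega> B"
  define F where "F = {p,q,r,s}"
  define Ts where "Ts = {{q,r,s},{p,r,s},{p,q,s},{p,q,r}}"
  have F: "F \<subseteq> \<Omega>" "card F = 4" using d pts unfolding F_def by auto
  have even: "card {T\<in>C. T \<subseteq> F} \<in> {0,2,4}"
    using two_graph F unfolding regular_two_graph_def C_def by blast
  have "{T\<in>C. T \<subseteq> F} = {T\<in>Ts. T \<in> C}"
  proof (intro equalityI subsetI)
    fix T assume T: "T \<in> {T\<in>C. T \<subseteq> F}"
    then have c3: "card T = 3" and TF: "T \<subseteq> F" unfolding C_def collinear_triples_def by auto
    have "\<not> F \<subseteq> T"
    proof
      assume "F \<subseteq> T"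
      then have "card F \<le> card T" using c3 by (intro card_mono) (auto intro: card_ge_0_finite)
      then show False using F c3 by simp
    qed
    then obtain u where u: "u \<in> F" "u \<notin> T" by blast
    have "finite F" using F by (metis card.infinite zero_neq_numeral)
    moreover have "T \<subseteq> F - {u}" "card (F - {u}) = 3" using TF u F by auto
    ultimately have "T = F - {u}" using c3 by (metis card_subset_eq finite_Diff)
    then show "T \<in> {T\<in>Ts. T \<in> C}" using T u d unfolding F_def Ts_def by auto
  qed (auto simp: F_def Ts_def)
  moreover have "card {T\<in>Ts. T \<in> C} =
    of_bool ({q,r,s} \<in> C) + of_bool ({p,r,s} \<in> C) + of_bool ({p,q,s} \<in> C) + of_bool ({p,q,r} \<in> C)"
  proof -
    have "{q,r,s} \<noteq> {p,r,s}" "{q,r,s} \<noteq> {p,q,s}" "{q,r,s} \<noteq> {p,q,r}"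
      "{p,r,s} \<noteq> {p,q,s}" "{p,r,s} \<noteq> {p,q,r}" "{p,q,s} \<noteq> {p,q,r}"
      using d by (auto simp: insert_eq_iff)
    then show ?thesis unfolding Ts_def by (subst card_filter_eq_sum_of_bool) auto
  qed
  moreover have "{q,r,s} \<in> C \<longleftrightarrow> collinear q r s" "{p,r,s} \<in> C \<longleftrightarrow> collinear p r s"
    "{p,q,s} \<in> C \<longleftrightarrow> collinear p q s" "{p,q,r} \<in> C \<longleftrightarrow> collinear p q r"
    unfolding C_def using d pts collinear_triples_iff by simp_all
  ultimately show ?thesis using even
    by (cases "collinear q r s"; cases "collinear p r s"; cases "collinear p q s";
        cases "collinear p q r") simp_all
qed

lemma line_replace_point_noncollinear:
  assumes d: "distinct [a,b,x,y,z]" and ab: "a \<in> \<Omega>" "b \<in> \<Omega>" and L: "{a,x,y,z} \<in># B"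
    and nx: "\<not> collinear a b x" and ny: "\<not> collinear a b y" and nz: "\<not> collinear a b z"
  shows "{b,x,y,z} \<in># B"
proof -
  have "x \<in> \<Omega>" "y \<in> \<Omega>" using line_in_points[OF L] by auto
  moreover have "collinear a x y" using line_collinear L by blast
  ultimately have "collinear b x y" using collinear_parity[of a b x y] d ab nx ny by auto
  then obtain w where w: "{b,x,y,w} \<in># B" "w \<notin> {b,x,y}"
    using collinear_obtain_line[of b x y] d by auto
  have "w = z"
  proof (rule ccontr)
    assume "w \<noteq> z"
    have "{x,y,a,z} \<in># B" "{x,y,b,w} \<in># B" using L w by (simp_all add: insert_commute)
    moreover have "{x,y,a,z} \<noteq> {x,y,b,w}" using d by auto
    ultimately have "{a,z,b,w} \<in># B" using line_symdiff by blast
    then show False using nz line_collinear by (metis insert_commute)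
  qed
  then show ?thesis using w by simp
qed

lemma line_through_two_move_partners:
  assumes d: "distinct [a,b,x,y,z]" and ab: "a \<in> \<Omega>" "b \<in> \<Omega>" and L: "{a,x,y,z} \<in># B"
    and Mx: "{a,b,x,x'} \<in># B" and My: "{a,b,y,y'} \<in># B"
  shows "\<exists>z'. {a,b,z,z'} \<in># B \<and> {b,x',y',z'} \<in># B"
proof -
  have "x \<in> \<Omega>" "z \<in> \<Omega>" using line_in_points[OF L] by auto
  have dx: "distinct [a,b,x,x']" and dy: "distinct [a,b,y,y']"
    using distinct_line Mx My by blast+
  have N: "{b,x',y,z} \<in># B" using line_through_move_partner[OF d L Mx] .
  have "{b,y',x,z} \<in># B"
    using line_through_move_partner[of a b y x z y'] d L My by (auto simp: insert_commute)
  then have "collinear b z x" using line_collinear by (metis insert_commute)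
  moreover have "collinear a z x" "collinear a b x"
    using L Mx line_collinear by (metis insert_commute)+
  ultimately have "collinear a b z"
    using collinear_parity[of a b z x] d ab \<open>x \<in> \<Omega>\<close> \<open>z \<in> \<Omega>\<close> by auto
  then obtain z' where Mz: "{a,b,z,z'} \<in># B" using collinear_obtain_line[of a b z] d by auto
  have "{b,y,x',z} \<in># B" "{b,y,a,y'} \<in># B" using N My by (simp_all add: insert_commute)
  moreover have "{b,y,x',z} \<noteq> {b,y,a,y'}" using d dx by auto
  ultimately have "{x',z,a,y'} \<in># B" using line_symdiff by blast
  then have "{a,z,x',y'} \<in># B" by (simp add: insert_commute)
  moreover have "{a,z,b,z'} \<in># B" using Mz by (simp add: insert_commute)
  moreover have "{a,z,x',y'} \<noteq> {a,z,b,z'}" using d dx dy by auto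
  ultimately have "{x',y',b,z'} \<in># B" using line_symdiff by blast
  then show ?thesis using Mz by (auto simp: insert_commute)
qed

text \<open>The image of a line through a but not b: b replaces a, and each of the three other points
  either stays (not collinear with a,b) or is replaced by its partner on the line through a,b.\<close>
lemma move_maps_line_through_left_only:
  assumes d: "distinct [a,b,x,y,z]" and ab: "a \<in> \<Omega>" "b \<in> \<Omega>" and L: "{a,x,y,z} \<in># B"
  shows "move B a b ` {a,x,y,z} \<in># B"
proof -
  let ?s = "move B a b"
  have cases: "collinear a b t \<and> {a,b,t,?s t} \<in># B \<or> \<not> collinear a b t \<and> ?s t = t"
    if "t \<in> {x,y,z}" for t using move_cases[of a b t] d that by auto
  have two_partners: "{b, ?s x, ?s y, ?s z} \<in># B"
    if "distinct [a,b,x,y,z]" "{a,x,y,z} \<in># B" "{a,b,x,?s x} \<in># B" "{a,b,y,?s y} \<in># B"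
    for x y z
    using line_through_two_move_partners[OF that(1) ab that(2-4)] move_on_line by metis
  have one_partner: "{b, ?s x, ?s y, ?s z} \<in># B"
    if "distinct [a,b,x,y,z]" "{a,x,y,z} \<in># B" "{a,b,x,?s x} \<in># B" "?s y = y" "?s z = z"
    for x y z
    using line_through_move_partner[OF that(1-3)] that(4,5) by simp
  have L': "{a,x,z,y} \<in># B" "{a,y,z,x} \<in># B" "{a,y,x,z} \<in># B" "{a,z,x,y} \<in># B"
    using L by (simp_all add: insert_commute)
  have d': "distinct [a,b,x,z,y]" "distinct [a,b,y,z,x]" "distinct [a,b,y,x,z]" "distinct [a,b,z,x,y]"
    using d by auto
  consider "collinear a b x" "collinear a b y" | "collinear a b x" "collinear a b z"
    | "collinear a b y" "collinear a b z"
    | "collinear a b x" "\<not> collinear a b y" "\<not> collinear a b z"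
    | "\<not> collinear a b x" "collinear a b y" "\<not> collinear a b z"
    | "\<not> collinear a b x" "\<not> collinear a b y" "collinear a b z"
    | "\<not> collinear a b x" "\<not> collinear a b y" "\<not> collinear a b z" by blast
  then have "{b, ?s x, ?s y, ?s z} \<in># B"
  proof cases
    case 1 then show ?thesis using two_partners[OF d L] cases by blast
  next
    case 2 then show ?thesis using two_partners[OF d'(1) L'(1)] cases by (metis insert_commute insertCI)
  next
    case 3 then show ?thesis using two_partners[OF d'(2) L'(2)] cases by (metis insert_commute insertCI)
  next
    case 4 then show ?thesis using one_partner[OF d L] cases by blast
  next
    case 5 then show ?thesis using one_partner[OF d'(3) L'(3)] cases by (metis insert_commute insertCI)
  next
    case 6 then show ?thesis using one_partner[OF d'(4) L'(4)] cases by (metis insert_commute insertCI)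
  next
    case 7
    then have "?s x = x" "?s y = y" "?s z = z" using cases by blast+
    then show ?thesis using 7 line_replace_point_noncollinear[OF d ab L] by simp
  qed
  then show ?thesis by (simp add: move_left)
qed

lemma move_maps_line_through_left:
  assumes ab: "a \<noteq> b" "a \<in> \<Omega>" "b \<in> \<Omega>" and L: "L \<in># B" and a: "a \<in> L"
  shows "move B a b ` L \<in># B"
proof -
  obtain x y z where Lx: "L = {a,x,y,z}" "distinct [a,x,y,z]"
    using line_obtain_through[OF L a] by blast
  have pair_line: "move B a b ` {a,b,y,z} \<in># B" if M: "{a,b,y,z} \<in># B" for y z
  proof -
    have "{a,b,z,y} \<in># B" using M by (simp add: insert_commute)
    then have "move B a b ` {a,b,y,z} = {b,a,z,y}"
      using move_on_line[OF M] move_on_line by (simp add: move_left move_right)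
    then show ?thesis using M by (simp add: insert_commute)
  qed
  show ?thesis
  proof (cases "b \<in> L")
    case True
    then consider "L = {a,b,y,z}" | "L = {a,b,x,z}" | "L = {a,b,x,y}" using Lx ab by auto
    then show ?thesis using pair_line L by cases auto
  next
    case False
    then have "distinct [a,b,x,y,z]" using Lx ab by auto
    then show ?thesis using move_maps_line_through_left_only ab L Lx by simp
  qed
qed

text \<open>For a line missing both a and b, use a line K through a and two of its points:
  K and its (\<triangle>)-partner K' pass through a, so their images are lines meeting in two
  points, and the image of their symmetric difference is a line again.\<close>
lemma move_maps_line_off_pair:
  assumes ab: "a \<noteq> b" "a \<in> \<Omega>" "b \<in> \<Omega>" and d: "distinct [a,w,x,y,z]" and bL: "b \<notin> {w,x,y,z}"
    and L: "{w,x,y,z} \<in># B" and c: "collinear a w x"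
  shows "move B a b ` {w,x,y,z} \<in># B"
proof -
  let ?s = "move B a b"
  obtain r where K: "{a,w,x,r} \<in># B" using collinear_obtain_line[of a w x] c d by auto
  have dK: "distinct [a,w,x,r]" using distinct_line[OF K] .
  have "{w,x,a,r} \<in># B" using K by (simp add: insert_commute)
  moreover have "{w,x,a,r} \<noteq> {w,x,y,z}" using d by auto
  ultimately have K': "{a,r,y,z} \<in># B" and ry: "r \<notin> {y,z}" using line_symdiff L by blast+
  have I: "{a,w,x,r} \<inter> {a,r,y,z} = {a,r}" and SD: "({a,w,x,r} - {a,r,y,z}) \<union> ({a,r,y,z} - {a,w,x,r}) = {w,x,y,z}"
    using d dK ry by auto
  have inj: "inj ?s" by (rule injI) (metis move_move)
  have "?s ` {a,w,x,r} \<inter> ?s ` {a,r,y,z} = ?s ` {a,r}" by (simp only: image_Int[OF inj, symmetric] I)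
  moreover have "card (?s ` {a,r}) = 2"
    using dK card_image[OF inj_on_subset[OF inj], of "{a,r}"] by (simp del: image_insert)
  ultimately have "card (?s ` {a,w,x,r} \<inter> ?s ` {a,r,y,z}) = 2" by simp
  moreover have "?s ` {a,w,x,r} \<in># B" "?s ` {a,r,y,z} \<in># B"
    using move_maps_line_through_left[OF ab K] move_maps_line_through_left[OF ab K'] by blast+
  ultimately have "(?s ` {a,w,x,r} - ?s ` {a,r,y,z}) \<union> (?s ` {a,r,y,z} - ?s ` {a,w,x,r}) \<in># B"
    using triangle unfolding property_triangle_def by blast
  then show ?thesis unfolding sym_diff_image[OF inj] SD .
qed

lemma move_maps_line:
  assumes ab: "a \<in> \<Omega>" "b \<in> \<Omega>" and L: "L \<in># B"
  shows "move B a b ` L \<in># B"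
proof (cases "a = b \<or> a \<in> L \<or> b \<in> L")
  case True
  then consider "a = b" | "a \<noteq> b" "a \<in> L" | "b \<noteq> a" "b \<in> L" by blast
  then show ?thesis
  proof cases
    case 1 then show ?thesis using L by (simp add: move_self)
  next
    case 2 then show ?thesis using move_maps_line_through_left ab L by blast
  next
    case 3 then show ?thesis using move_maps_line_through_left[of b a L] ab L by (simp add: move_commute)
  qed
next
  case False
  obtain w x y z where Lw: "L = {w,x,y,z}" "distinct [w,x,y,z]"
    using card_eq_4_obtain[OF card_line[OF L]] by blast
  then have L4: "{w,x,y,z} \<in># B" using L by simp
  have pts: "w \<in> \<Omega>" "x \<in> \<Omega>" "y \<in> \<Omega>" using line_in_points[OF L4] by auto
  have d: "distinct [a,w,x,y,z]" using Lw False by auto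
  have "collinear w x y" using line_collinear[OF L4] .
  then have "collinear a w x \<or> collinear a w y \<or> collinear a x y"
    using collinear_parity[of a w x y] d ab pts by auto
  moreover have "L = {w,y,x,z}" "L = {x,y,w,z}" "distinct [a,w,y,x,z]" "distinct [a,x,y,w,z]"
    using Lw d by auto
  ultimately show ?thesis
    using move_maps_line_off_pair[OF _ ab(1,2)] d False L Lw by metis
qed

lemma move_Aut: "a \<in> \<Omega> \<Longrightarrow> b \<in> \<Omega> \<Longrightarrow> move B a b \<in> Aut \<Omega> B"
  by (rule Aut_if_involution) (simp_all add: move_move move_outside move_maps_line)

end

subsection \<open>Words of moves\<close>

lemma move_seq_snoc: "xs \<noteq> [] \<Longrightarrow> move_seq B (xs @ [y]) = move B (last xs) y \<circ> move_seq B xs"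
  by (induction xs rule: induct_list012) (auto simp: o_assoc)

lemma move_seq_Cons: "zs \<noteq> [] \<Longrightarrow> move_seq B (y # zs) = move_seq B zs \<circ> move B y (hd zs)"
  by (cases zs) auto

context supersimple_design
begin

lemma move_seq_rev_comp: "move_seq B (rev xs) \<circ> move_seq B xs = id"
proof (induction xs rule: rev_induct)
  case (snoc y ys)
  show ?case
  proof (cases "ys = []")
    case False
    have "move_seq B (rev (ys @ [y])) \<circ> move_seq B (ys @ [y]) =
       move_seq B (rev ys) \<circ> (move B y (last ys) \<circ> move B (last ys) y) \<circ> move_seq B ys"
      using move_seq_Cons[of "rev ys" B y] move_seq_snoc[OF False] False
      by (simp add: hd_rev o_assoc)
    also have "\<dots> = id"
      by (simp only: move_commute[of y "last ys"] move_involution comp_id snoc.IH)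
    finally show ?thesis .
  qed simp
qed simp

lemma inv_move_seq: "inv (move_seq B xs) = move_seq B (rev xs)"
  using move_seq_rev_comp[of xs] move_seq_rev_comp[of "rev xs"] by (intro inv_unique_comp) auto

end

context two_graph_design
begin

lemma move_seq_Aut: "set xs \<subseteq> \<Omega> \<Longrightarrow> move_seq B xs \<in> Aut \<Omega> B"
  by (induction xs rule: induct_list012) (auto simp: Aut_id intro!: Aut_comp move_Aut)

lemma move_conj_move:
  "a \<in> \<Omega> \<Longrightarrow> b \<in> \<Omega> \<Longrightarrow>
    move B a b \<circ> move B c d \<circ> move B a b = move B (move B a b c) (move B a b d)"
  using Aut_conj_move[OF move_Aut, of a b c d] by (simp add: inv_move)

lemma move_triangle_noncollinear:
  assumes pts: "e \<in> \<Omega>" "c \<in> \<Omega>" "d \<in> \<Omega>" and dist: "distinct [e,c,d]" and nc: "\<not> collinear e c d"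
  shows "move B d e \<circ> move B c d \<circ> move B e c = move B c d"
proof (rule involution_conj_cancel[OF move_involution move_involution])
  have "move B e c d = d" "move B e d c = c"
    using move_fixes_noncollinear[of e c d] move_fixes_noncollinear[of e d c] dist nc
      collinear_swap23[of e c d] by auto
  then show "move B d e \<circ> move B e c \<circ> move B d e = move B c d"
    "move B e c \<circ> move B c d \<circ> move B e c = move B d e"
    using move_conj_move[of e d e c] move_conj_move[of e c c d] pts
    by (simp_all add: move_left move_right move_commute[of d e] move_commute[of d c])
qed

definition elementary_moves :: "('a \<Rightarrow> 'a) set" where
  "elementary_moves = {move B a b | a b. a \<in> \<Omega> \<and> b \<in> \<Omega> \<and> a \<noteq> b}"

lemma move_seq_gen_group: "set xs \<subseteq> \<Omega> \<Longrightarrow> move_seq B xs \<in> gen_group elementary_moves"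
proof (induction xs rule: induct_list012)
  case (3 a b rest)
  then have "move B a b \<in> gen_group elementary_moves"
    by (cases "a = b") (auto simp: move_self elementary_moves_def intro: gen_group.intros)
  moreover have "move_seq B (b # rest) \<in> gen_group elementary_moves" using 3 by simp
  ultimately show ?case by (metis move_seq.simps(1) gen_group.gen_mult)
qed (auto intro: gen_group.intros)

lemma move_seq_in_L_inf:
  "as \<noteq> [] \<Longrightarrow> set as \<subseteq> \<Omega> \<Longrightarrow> move_seq B (inf0 # as) \<in> L_inf \<Omega> B inf0"
  unfolding L_inf_def by blast

lemma id_in_L_inf: "inf0 \<in> \<Omega> \<Longrightarrow> id \<in> L_inf \<Omega> B inf0"
  using move_seq_in_L_inf[of "[inf0]" inf0] by (simp add: move_self)

text \<open>Appending [c,d] to a word ending in e: if e \<in> {c,d} this is one more move; if c,d,e lie on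
  a line {e,c,d,f} then [c,d] = [e,f]; otherwise append c,d,e and use
  move_triangle_noncollinear.\<close>
lemma L_inf_move_closed:
  assumes inf: "inf0 \<in> \<Omega>" and p: "p \<in> L_inf \<Omega> B inf0" and cd: "c \<in> \<Omega>" "d \<in> \<Omega>"
  shows "move B c d \<circ> p \<in> L_inf \<Omega> B inf0"
proof -
  obtain as where as: "as \<noteq> []" "set as \<subseteq> \<Omega>" "p = move_seq B (inf0 # as)"
    using p unfolding L_inf_def by blast
  define e where "e = last as"
  have e: "e \<in> \<Omega>" using as e_def by auto
  have snoc: "move_seq B (inf0 # as @ [y]) = move B e y \<circ> p" for y
    using move_seq_snoc[of "inf0 # as"] as e_def by simp
  have append_move: "move B e y \<circ> p \<in> L_inf \<Omega> B inf0" if "y \<in> \<Omega>" for y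
    using move_seq_in_L_inf[of "as @ [y]" inf0] as that snoc by simp
  consider "c = d" | "e = c" | "e = d" | "distinct [e,c,d]" "collinear e c d"
    | "distinct [e,c,d]" "\<not> collinear e c d" by auto
  then show ?thesis
  proof cases
    case 1 then show ?thesis using p by (simp add: move_self)
  next
    case 2 then show ?thesis using append_move cd by blast
  next
    case 3 then show ?thesis using append_move cd move_commute by metis
  next
    case 4
    then obtain f where f: "{e,c,d,f} \<in># B" using collinear_obtain_line by blast
    then have "{c,d,e,f} \<in># B" by (simp add: insert_commute)
    then have "move B c d = move B e f" by (rule move_eq_move_complement)
    then show ?thesis using append_move line_in_points[OF f] by simp
  next
    case 5
    have "move_seq B (inf0 # (as @ [c,d]) @ [e]) = move B d e \<circ> move B c d \<circ> move B e c \<circ> p"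
      using move_seq_snoc[of "inf0 # as @ [c] @ [d]" B e] move_seq_snoc[of "inf0 # as @ [c]" B d]
        snoc[of c] by (simp add: o_assoc)
    also have "\<dots> = move B c d \<circ> p"
      using move_triangle_noncollinear[OF e cd 5] by (simp add: o_assoc)
    finally show ?thesis using move_seq_in_L_inf[of "(as @ [c,d]) @ [e]" inf0] as cd e by simp
  qed
qed

lemma L_inf_move_seq_closed:
  "inf0 \<in> \<Omega> \<Longrightarrow> set xs \<subseteq> \<Omega> \<Longrightarrow> p \<in> L_inf \<Omega> B inf0 \<Longrightarrow> move_seq B xs \<circ> p \<in> L_inf \<Omega> B inf0"
proof (induction xs arbitrary: p rule: induct_list012)
  case (3 a b rest)
  then have "move B a b \<circ> p \<in> L_inf \<Omega> B inf0" using L_inf_move_closed by simp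
  then have "move_seq B (b # rest) \<circ> (move B a b \<circ> p) \<in> L_inf \<Omega> B inf0"
    using "3.IH"(2) 3 by (meson list.set_intros set_subset_Cons subset_code(1))
  then show ?case by (simp only: move_seq.simps comp_assoc)
qed simp_all

lemma L_inf_eq_gen_group:
  assumes inf: "inf0 \<in> \<Omega>"
  shows "L_inf \<Omega> B inf0 = gen_group elementary_moves"
proof
  show "L_inf \<Omega> B inf0 \<subseteq> gen_group elementary_moves"
    unfolding L_inf_def using inf by (auto intro!: move_seq_gen_group)
  show "gen_group elementary_moves \<subseteq> L_inf \<Omega> B inf0"
  proof
    fix g assume "g \<in> gen_group elementary_moves"
    then show "g \<in> L_inf \<Omega> B inf0"
    proof (induction rule: gen_group.induct)
      case gen_id then show ?case by (rule id_in_L_inf[OF inf])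
    next
      case (gen_base e)
      then show ?case
        using L_inf_move_closed[OF inf id_in_L_inf[OF inf]] unfolding elementary_moves_def by auto
    next
      case (gen_mult g h)
      then obtain as where as: "set (inf0 # as) \<subseteq> \<Omega>" "h = move_seq B (inf0 # as)"
        using inf unfolding L_inf_def by auto
      show ?case using L_inf_move_seq_closed[OF inf as(1) gen_mult.IH(1)] as(2) by blast
    next
      case (gen_inv g)
      then obtain as where as: "set (rev (inf0 # as)) \<subseteq> \<Omega>" "g = move_seq B (inf0 # as)"
        using inf unfolding L_inf_def by auto
      have "move_seq B (rev (inf0 # as)) \<circ> id \<in> L_inf \<Omega> B inf0"
        using L_inf_move_seq_closed[OF inf as(1) id_in_L_inf[OF inf]] .
      then show ?case using as(2) by (simp only: inv_move_seq comp_id)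
    qed
  qed
qed

lemma L_inf_subset_Aut: "inf0 \<in> \<Omega> \<Longrightarrow> L_inf \<Omega> B inf0 \<subseteq> Aut \<Omega> B"
  unfolding L_inf_def using move_seq_Aut by auto

subsection \<open>Two moves commute or braid\<close>

lemma commute_or_braid_moves_sharing_point:
  assumes pts: "a \<in> \<Omega>" "b \<in> \<Omega>" "d \<in> \<Omega>" and dd: "distinct [a,b,d]"
  shows "commute_or_braid (move B a b) (move B a d)"
proof (cases "collinear a b d")
  case True
  then obtain f where f: "{a,b,d,f} \<in># B" using collinear_obtain_line[of a b d] dd by auto
  have "{a,d,b,f} \<in># B" using f by (simp add: insert_commute)
  then have "move B a d b = f" by (rule move_on_line)
  then have "move B a d \<circ> move B a b \<circ> move B a d = move B d f"
    using move_conj_move[of a d a b] pts by (simp add: move_left)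
  also have "\<dots> = move B a b"
    using f by (intro move_eq_move_complement) (simp add: insert_commute)
  finally show ?thesis by (rule commute_or_braid_if_conj_fixed[OF move_involution])
next
  case False
  have "move B a d b = b" "move B a b d = d"
    using move_fixes_noncollinear[of a d b] move_fixes_noncollinear[of a b d] dd False
      collinear_swap23[of a b d] by auto
  then have "move B a d \<circ> move B a b \<circ> move B a d = move B d b"
    "move B a b \<circ> move B a d \<circ> move B a b = move B b d"
    using move_conj_move[of a d a b] move_conj_move[of a b a d] pts by (simp_all add: move_left)
  then show ?thesis unfolding commute_or_braid_def using move_commute[of d b] by simp
qed

lemma braid_disjoint_moves:
  assumes pts: "a \<in> \<Omega>" "b \<in> \<Omega>" "c \<in> \<Omega>" "d \<in> \<Omega>" and dd: "distinct [a,b,c,d]"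
    and A: "{c,d,a,a'} \<in># B" and nb: "\<not> collinear c d b"
    and C: "{a,b,c,c'} \<in># B" and nd: "\<not> collinear a b d"
  shows "move B c d \<circ> move B a b \<circ> move B c d = move B a b \<circ> move B c d \<circ> move B a b"
proof -
  have "move B c d a = a'" "move B a b c = c'" using move_on_line[OF A] move_on_line[OF C] .
  moreover have "move B c d b = b" "move B a b d = d"
    using move_fixes_noncollinear[of c d b] move_fixes_noncollinear[of a b d] dd nb nd by auto
  ultimately have "move B c d \<circ> move B a b \<circ> move B c d = move B a' b"
    "move B a b \<circ> move B c d \<circ> move B a b = move B c' d"
    using move_conj_move[of c d a b] move_conj_move[of a b c d] pts by simp_all
  moreover have "move B a' b = move B d c'"
  proof -
    have "a' \<noteq> b"
    proof
      assume "a' = b"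
      then have "{c,d,b,a} \<in># B" using A by (simp add: insert_commute)
      then show False using nb line_collinear by blast
    qed
    then have "{a,c,d,a'} \<noteq> {a,c,b,c'}" using dd by auto
    moreover have "{a,c,d,a'} \<in># B" "{a,c,b,c'} \<in># B" using A C by (simp_all add: insert_commute)
    ultimately have "{d,a',b,c'} \<in># B" using line_symdiff by blast
    then have "{a',b,d,c'} \<in># B" by (simp add: insert_commute)
    then show ?thesis by (rule move_eq_move_complement)
  qed
  ultimately show ?thesis by (simp add: move_commute[of d c'])
qed

lemma commute_or_braid_disjoint_moves_half_collinear:
  assumes pts: "a \<in> \<Omega>" "b \<in> \<Omega>" "c \<in> \<Omega>" "d \<in> \<Omega>" and dd: "distinct [a,b,c,d]"
    and ca: "collinear c d a" and nb: "\<not> collinear c d b"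
  shows "commute_or_braid (move B a b) (move B c d)"
proof -
  obtain a' where A: "{c,d,a,a'} \<in># B" using collinear_obtain_line[of c d a] ca dd by auto
  have "collinear a c d" "\<not> collinear b c d"
    using ca nb collinear_swap12[of a c d] collinear_swap23[of c a d] collinear_swap12[of b c d]
      collinear_swap23[of c b d] by simp_all
  then have parity: "collinear a b d \<noteq> collinear a b c" using collinear_parity[of a b c d] dd pts by auto
  show ?thesis
  proof (cases "collinear a b c")
    case True
    obtain c' where "{a,b,c,c'} \<in># B" using collinear_obtain_line[of a b c] True dd by auto
    then show ?thesis
      using braid_disjoint_moves[OF pts dd A nb] True parity unfolding commute_or_braid_def by simp
  next
    case False
    obtain d' where "{a,b,d,d'} \<in># B" using collinear_obtain_line[of a b d] False parity dd by auto
    moreover have "{d,c,a,a'} \<in># B" using A by (simp add: insert_commute)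
    moreover have "\<not> collinear d c b" "distinct [a,b,d,c]" using nb collinear_swap12 dd by auto
    ultimately show ?thesis
      using braid_disjoint_moves[OF pts(1,2,4,3)] False unfolding commute_or_braid_def
      by (simp add: move_commute[of d c])
  qed
qed

lemma commute_or_braid_disjoint_moves:
  assumes pts: "a \<in> \<Omega>" "b \<in> \<Omega>" "c \<in> \<Omega>" "d \<in> \<Omega>" and dd: "distinct [a,b,c,d]"
  shows "commute_or_braid (move B a b) (move B c d)"
proof -
  have conj_fixed: "commute_or_braid (move B a b) (move B c d)"
    if "move B c d \<circ> move B a b \<circ> move B c d = move B a b"
    using that by (rule commute_or_braid_if_conj_fixed[OF move_involution])
  consider "collinear c d a" "collinear c d b" | "collinear c d a" "\<not> collinear c d b"
    | "\<not> collinear c d a" "collinear c d b" | "\<not> collinear c d a" "\<not> collinear c d b" by blast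
  then show ?thesis
  proof cases
    case 1
    moreover have "distinct [c,d,a]" "distinct [c,d,b]" using dd by auto
    ultimately obtain a' b' where A: "{c,d,a,a'} \<in># B" and Bb: "{c,d,b,b'} \<in># B"
      using collinear_obtain_line by metis
    have ha: "move B c d a = a'" and hb: "move B c d b = b'" using move_on_line A Bb by blast+
    show ?thesis
    proof (cases "a' = b")
      case True
      then have "move B c d b = a" using ha move_move[of c d a] by simp
      then show ?thesis
        using conj_fixed move_conj_move[of c d a b] pts ha True move_commute[of b a] by simp
    next
      case False
      then have "{c,d,a,a'} \<noteq> {c,d,b,b'}" using dd by auto
      then have "{a,b,a',b'} \<in># B" using line_symdiff[OF A Bb] by (simp add: insert_commute)
      then have "move B a b = move B a' b'" by (rule move_eq_move_complement)
      then show ?thesis using conj_fixed move_conj_move[of c d a b] pts ha hb by simp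
    qed
  next
    case 2 then show ?thesis using commute_or_braid_disjoint_moves_half_collinear[OF pts dd] by blast
  next
    case 3
    have "distinct [b,a,c,d]" using dd by auto
    then show ?thesis
      using commute_or_braid_disjoint_moves_half_collinear[OF pts(2,1,3,4)] 3 by (simp add: move_commute[of b a])
  next
    case 4
    then have "move B c d a = a" "move B c d b = b"
      using move_fixes_noncollinear[of c d a] move_fixes_noncollinear[of c d b] dd by auto
    then show ?thesis using conj_fixed move_conj_move[of c d a b] pts by simp
  qed
qed

lemma commute_or_braid_moves:
  assumes pts: "a \<in> \<Omega>" "b \<in> \<Omega>" "c \<in> \<Omega>" "d \<in> \<Omega>" and "a \<noteq> b" "c \<noteq> d"
  shows "commute_or_braid (move B a b) (move B c d)"
proof -
  consider "{a,b} = {c,d}" | "a = c" "b \<noteq> d" | "a = d" "b \<noteq> c" | "b = c" "a \<noteq> d" | "b = d" "a \<noteq> c"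
    | "distinct [a,b,c,d]" using assms by auto
  then show ?thesis
  proof cases
    case 1
    then have "move B a b = move B c d" by (metis doubleton_eq_iff move_commute)
    then show ?thesis by (simp add: commute_or_braid_refl)
  next
    case 2 then show ?thesis using commute_or_braid_moves_sharing_point[of a b d] assms by simp
  next
    case 3 then show ?thesis
      using commute_or_braid_moves_sharing_point[of a b c] assms move_commute[of c d] by simp
  next
    case 4 then show ?thesis
      using commute_or_braid_moves_sharing_point[of b a d] assms move_commute[of a b] by simp
  next
    case 5 then show ?thesis
      using commute_or_braid_moves_sharing_point[of b a c] assms move_commute[of a b]
        move_commute[of c d] by simp
  next
    case 6 then show ?thesis using commute_or_braid_disjoint_moves pts by blast
  qed
qed

lemma L_inf_subgroup_Aut: "inf0 \<in> \<Omega> \<Longrightarrow> is_subgroup_of (L_inf \<Omega> B inf0) (Aut \<Omega> B)"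
  unfolding is_subgroup_of_def
  using L_inf_subset_Aut L_inf_eq_gen_group id_in_L_inf by (auto intro: gen_group.intros)

lemma elementary_moves_conj_closed:
  assumes g: "g \<in> Aut \<Omega> B" and e: "e \<in> elementary_moves"
  shows "g \<circ> e \<circ> inv g \<in> elementary_moves"
proof -
  obtain a b where ab: "e = move B a b" "a \<noteq> b" "a \<in> \<Omega>" "b \<in> \<Omega>"
    using e unfolding elementary_moves_def by blast
  have perm: "g permutes \<Omega>" using g unfolding Aut_def by simp
  then have "g a \<noteq> g b" "g a \<in> \<Omega>" "g b \<in> \<Omega>"
    using ab permutes_inj[OF perm] by (simp_all add: inj_eq permutes_in_image)
  then show ?thesis using Aut_conj_move[OF g] ab unfolding elementary_moves_def by auto
qed

lemma three_transposition_group_L_inf: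
  assumes inf: "inf0 \<in> \<Omega>"
  shows "three_transposition_group (L_inf \<Omega> B inf0) elementary_moves"
  unfolding three_transposition_group_def
proof (intro conjI ballI)
  fix e assume "e \<in> elementary_moves"
  then obtain a b where "e = move B a b" "a \<noteq> b" unfolding elementary_moves_def by blast
  then show "e \<circ> e = id" "e \<noteq> id" using move_involution move_left[of a b] by (metis id_apply)+
next
  fix g e assume "g \<in> L_inf \<Omega> B inf0" "e \<in> elementary_moves"
  then show "g \<circ> e \<circ> inv g \<in> elementary_moves"
    using L_inf_subset_Aut[OF inf] elementary_moves_conj_closed by blast
next
  fix g h assume "g \<in> elementary_moves" "h \<in> elementary_moves"
  then show "(h \<circ> g) ^^ 2 = id \<or> (h \<circ> g) ^^ 3 = id"
    unfolding elementary_moves_def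
    using commute_or_braid_order[OF move_involution move_involution commute_or_braid_moves] by blast
qed (rule L_inf_eq_gen_group[OF inf])

end

theorem theorem4p2:
  fixes \<Omega> :: "'a set" and \<B> :: "'a set multiset" and lam :: nat and inf0 :: 'a
  assumes "design_2_4 \<Omega> \<B> lam"
    and "supersimple \<B>"
    and "property_triangle \<B>"
    and "regular_two_graph \<Omega> (collinear_triples \<Omega> \<B>)"
    and "inf0 \<in> \<Omega>"
  shows "is_subgroup_of (L_inf \<Omega> \<B> inf0) (Aut \<Omega> \<B>)
    \<and> three_transposition_group (L_inf \<Omega> \<B> inf0) {move \<B> a b | a b. a \<in> \<Omega> \<and> b \<in> \<Omega> \<and> a \<noteq> b}"
proof -
  interpret two_graph_design \<Omega> \<B> lam
    using assms(1-4) by unfold_locales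
  show ?thesis
    using L_inf_subgroup_Aut three_transposition_group_L_inf assms(5)
    unfolding elementary_moves_def by blast
qed

end
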